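(* Let $q=p_1p_2$ with $p_1\neq p_2$ odd primes. Consider the map $\mathcal S$ sending a pair of integers $(q_1,q_2)$ with $q_1,q_2,q_1+q_2,q_1-q_2$ all $\not\equiv 0\pmod q$ to the triple of polynomials $\mathcal S(q_1,q_2)=(\psi(q_1,q_2),\alpha(q_1,q_2),\beta(q_1,q_2))$. Then $\mathcal S$ takes at most $11$ distinct values.
   Context: Let $\gamma=e^{2\pi i/q}$. Let $A$ be the set of residues in $\{1,\dots,q-1\}$ coprime to $q$, $B=\{xp_1: x=1,\dots,p_2-1\}$ and $C=\{xp_2: x=1,\dots,p_1-1\}$. For a pair $(q_1,q_2)$ and a set $S\subset\{1,\dots,q-1\}$ put $\Pi_S(q_1,q_2)(z)=\sum_{l\in S}\prod_{i=1}^{2}(z-\gamma^{q_il})(z-\gamma^{-q_il})$; then $\psi=\Pi_A$, $\alpha=\Pi_B$, $\beta=\Pi_C$. *)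

theory Defs
  imports Complex_Main "HOL-Computational_Algebra.Polynomial" "HOL-Computational_Algebra.Primes"
begin

text \<open>gamma^k for gamma = exp(2 pi i / q), integer exponent k\<close>
definition gam :: "nat \<Rightarrow> int \<Rightarrow> complex" where
  "gam q k = cis (2 * pi * of_int k / of_nat q)"

definition fac :: "nat \<Rightarrow> int \<Rightarrow> nat \<Rightarrow> complex poly" where
  "fac q a l = [:- gam q (a * int l), 1:] * [:- gam q (- (a * int l)), 1:]"

definition PiS :: "nat \<Rightarrow> nat set \<Rightarrow> int \<Rightarrow> int \<Rightarrow> complex poly" where
  "PiS q S q1 q2 = (\<Sum>l\<in>S. fac q q1 l * fac q q2 l)"

definition setA :: "nat \<Rightarrow> nat set" where
  "setA q = {l \<in> {1..q-1}. coprime l q}"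

definition setB :: "nat \<Rightarrow> nat \<Rightarrow> nat set" where
  "setB p1 p2 = (\<lambda>x. x * p1) ` {1..p2-1}"

definition setC :: "nat \<Rightarrow> nat \<Rightarrow> nat set" where
  "setC p1 p2 = (\<lambda>x. x * p2) ` {1..p1-1}"

definition Smap :: "nat \<Rightarrow> nat \<Rightarrow> int \<times> int \<Rightarrow> complex poly \<times> complex poly \<times> complex poly" where
  "Smap p1 p2 qq = (case qq of (q1, q2) \<Rightarrow>
     (PiS (p1*p2) (setA (p1*p2)) q1 q2,
      PiS (p1*p2) (setB p1 p2) q1 q2,
      PiS (p1*p2) (setC p1 p2) q1 q2))"

definition admissible :: "nat \<Rightarrow> int \<times> int \<Rightarrow> bool" where
  "admissible q qq = (case qq of (q1, q2) \<Rightarrow>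
     \<not> int q dvd q1 \<and> \<not> int q dvd q2 \<and> \<not> int q dvd (q1 + q2) \<and> \<not> int q dvd (q1 - q2))"

end

theory Submission imports Defs begin

(* Write gamma = exp(2 pi i/q), q = p1 p2, and c(x) = gamma^x + gamma^-x.
   Since (z - gamma^t)(z - gamma^-t) = z^2 - c(t) z + 1 and c(s) c(t) = c(s+t) + c(s-t),
   each summand of Pi_S(q1,q2) is a palindromic quartic, so Pi_S(q1,q2) is the quartic
     |S| z^4 - u z^3 + (2|S| + v) z^2 - u z + |S|
   with u = W_S(q1) + W_S(q2), v = W_S(q1+q2) + W_S(q1-q2), W_S(k) = sum_{l in S} c(k l)
   (lemma PiS_quartic).
   For S = A, B, C these sums are Ramanujan-type sums: by orthogonality of roots of unity
   they depend only on the divisibility type (p1 | k, p2 | k) of k.  Hence S(q1,q2) depends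
   only on the types of q1, q2, q1+q2, q1-q2, symmetrically in the first two and the last two
   (lemmas Smap_Sform, Sform_swap).
   Finally, for an odd prime p, if p divides two of q1, q2, q1+q2, q1-q2 it divides all four,
   and admissibility forbids q = p1 p2 dividing any of them; a finite case analysis leaves
   eleven type patterns up to the two symmetries (lemma reps_cover), which bounds the number
   of values by 11. *)

section \<open>Sums of roots of unity\<close>

lemma gam_mult: "gam q a * gam q b = gam q (a + b)"
  by (simp add: gam_def cis_mult add_divide_distrib distrib_left)

lemma gam_zero [simp]: "gam q 0 = 1"
  by (simp add: gam_def)

lemma gam_sum_multiples:
  assumes n: "n > 0" and d: "d > 0" and q: "q = n * d"
  shows "(\<Sum>x<n. gam q (k * int (x * d))) = (if int n dvd k then of_nat n else 0)"
proof -
  define z where "z = cis (2 * pi * of_int k / of_nat n)"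
  have powers: "gam q (k * int (x * d)) = z ^ x" for x
    unfolding z_def gam_def DeMoivre q using n d
    by (intro arg_cong[where f=cis]) (simp add: field_simps)
  have "z ^ n = cis (2 * pi * of_int k)" unfolding z_def DeMoivre using n
    by (intro arg_cong[where f=cis]) (simp add: field_simps)
  then have z_root: "z ^ n = 1" by simp
  show ?thesis
  proof (cases "int n dvd k")
    case True
    then obtain m where "k = int n * m" by blast
    then have "z = cis (2 * pi * of_int m)" unfolding z_def using n
      by (intro arg_cong[where f=cis]) (simp add: field_simps)
    then have "z = 1" by simp
    then show ?thesis using True unfolding powers by simp
  next
    case False
    have "z \<noteq> 1"
    proof
      assume "z = 1"
      then have "cos (2 * pi * of_int k / of_nat n) = 1" unfolding z_def
        by (metis Re_complex_of_real cis.sel(1) of_real_1)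
      then obtain m :: int where "2 * pi * of_int k / of_nat n = m * 2 * pi"
        by (auto simp: cos_one_2pi_int)
      then have "real_of_int k = real n * of_int m" using n by (simp add: field_simps)
      then have "k = int n * m" by (metis of_int_eq_iff of_int_mult of_int_of_nat_eq)
      then show False using False by simp
    qed
    then show ?thesis using False z_root unfolding powers by (simp add: geometric_sum)
  qed
qed

section \<open>Each \<open>\<Pi>\<^sub>S\<close> is a palindromic quartic\<close>

definition cosg :: "nat \<Rightarrow> int \<Rightarrow> complex" where
  "cosg q x = gam q x + gam q (- x)"

lemma fac_eq: "fac q a l = [:1, - cosg q (a * int l), 1:]"
proof -
  have "gam q (a * int l) * gam q (- (a * int l)) = 1" by (simp add: gam_mult)
  then show ?thesis by (simp add: fac_def cosg_def algebra_simps)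
qed

lemma cosg_mult: "cosg q x * cosg q y = cosg q (x + y) + cosg q (x - y)"
proof -
  have "cosg q x * cosg q y = gam q x * gam q y + gam q x * gam q (- y)
      + gam q (- x) * gam q y + gam q (- x) * gam q (- y)"
    by (simp add: cosg_def algebra_simps)
  also have "\<dots> = gam q (x + y) + gam q (x - y) + gam q (- (x - y)) + gam q (- (x + y))"
    by (simp add: gam_mult)
  finally show ?thesis by (simp add: cosg_def)
qed

lemma fac_prod: "fac q a l * fac q b l =
  [:1, - (cosg q (a * int l) + cosg q (b * int l)),
     2 + cosg q ((a + b) * int l) + cosg q ((a - b) * int l),
     - (cosg q (a * int l) + cosg q (b * int l)), 1:]"
proof -
  have "cosg q (a * int l) * cosg q (b * int l) = cosg q ((a + b) * int l) + cosg q ((a - b) * int l)"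
    by (simp add: cosg_mult algebra_simps)
  then show ?thesis unfolding fac_eq by (simp add: algebra_simps)
qed

lemma sum_quartic_coeffs: "(\<Sum>l\<in>S. [:f0 l, f1 l, f2 l, f3 l, f4 l:]) =
   [:sum f0 S, sum f1 S, sum f2 S, sum f3 S, sum f4 S:]"
proof (cases "finite S")
  case True
  then show ?thesis by (induction S rule: finite_induct) (auto simp: add_pCons)
qed simp

definition quartic :: "nat \<Rightarrow> complex \<Rightarrow> complex \<Rightarrow> complex poly" where
  "quartic n u v = [:of_nat n, - u, 2 * of_nat n + v, - u, of_nat n:]"

definition cos_sum :: "nat \<Rightarrow> nat set \<Rightarrow> int \<Rightarrow> complex" where
  "cos_sum q S a = (\<Sum>l\<in>S. cosg q (a * int l))"

lemma PiS_quartic: "PiS q S a b =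
   quartic (card S) (cos_sum q S a + cos_sum q S b) (cos_sum q S (a + b) + cos_sum q S (a - b))"
  unfolding PiS_def fac_prod sum_quartic_coeffs cos_sum_def quartic_def
  by (simp add: sum.distrib sum_negf sum_subtractf)

section \<open>Exponential sums over \<open>A\<close>, \<open>B\<close>, \<open>C\<close>\<close>

definition exp_sum :: "nat \<Rightarrow> nat set \<Rightarrow> int \<Rightarrow> complex" where
  "exp_sum q S a = (\<Sum>l\<in>S. gam q (a * int l))"

lemma cos_sum_exp_sum: "cos_sum q S a = exp_sum q S a + exp_sum q S (- a)"
  unfolding cos_sum_def exp_sum_def cosg_def by (simp add: sum.distrib)

lemma exp_sum_nonzero_multiples:
  assumes "0 < d" "0 < n" "q = n * d"
  shows "exp_sum q ((\<lambda>x. x * d) ` {1..n-1}) k = (if int n dvd k then of_nat n else 0) - 1"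
proof -
  have inj: "inj_on (\<lambda>x. x * d) {..<n}" using assms by (auto simp: inj_on_def)
  have "{..<n} = insert 0 {1..n-1}" using assms by auto
  then have "(\<lambda>x. x * d) ` {..<n} = insert 0 ((\<lambda>x. x * d) ` {1..n-1})" by simp
  moreover have "0 \<notin> (\<lambda>x. x * d) ` {1..n-1}" using assms by auto
  ultimately have "exp_sum q ((\<lambda>x. x * d) ` {..<n}) k = 1 + exp_sum q ((\<lambda>x. x * d) ` {1..n-1}) k"
    unfolding exp_sum_def by simp
  moreover have "exp_sum q ((\<lambda>x. x * d) ` {..<n}) k = (if int n dvd k then of_nat n else 0)"
    using inj gam_sum_multiples[OF \<open>0 < n\<close> \<open>0 < d\<close> \<open>q = n * d\<close>]
    unfolding exp_sum_def by (simp add: sum.reindex)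
  ultimately show ?thesis by simp
qed

lemma nonzero_multiples_eq:
  fixes d n :: nat
  assumes "0 < d" "0 < n"
  shows "(\<lambda>x. x * d) ` {1..n-1} = {l \<in> {1..d*n-1}. d dvd l}"
proof
  show "(\<lambda>x. x * d) ` {1..n-1} \<subseteq> {l \<in> {1..d*n-1}. d dvd l}"
  proof
    fix l assume "l \<in> (\<lambda>x. x * d) ` {1..n-1}"
    then obtain x where x: "1 \<le> x" "x \<le> n - 1" "l = x * d" by auto
    have "x * d \<le> (n - 1) * d" using x(2) by (rule mult_le_mono1)
    also have "\<dots> = d * n - d" by (simp add: algebra_simps diff_mult_distrib)
    finally show "l \<in> {l \<in> {1..d*n-1}. d dvd l}" using x assms by auto
  qed
next
  show "{l \<in> {1..d*n-1}. d dvd l} \<subseteq> (\<lambda>x. x * d) ` {1..n-1}"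
  proof
    fix l assume l: "l \<in> {l \<in> {1..d*n-1}. d dvd l}"
    then obtain x where x: "l = d * x" by auto
    have "d * x \<le> d * n - 1" using l x by auto
    moreover have "0 < d * n" using assms by simp
    ultimately have "d * x < d * n" by linarith
    then have "x < n" by simp
    moreover have "x \<ge> 1" using l x by (cases x) auto
    ultimately show "l \<in> (\<lambda>x. x * d) ` {1..n-1}" using x
      by (auto simp: mult.commute intro!: image_eqI[where x=x])
  qed
qed

lemma coprime_prime_iff: "prime (p::nat) \<Longrightarrow> coprime l p \<longleftrightarrow> \<not> p dvd l"
  by (metis coprime_commute prime_imp_coprime coprime_absorb_left not_prime_unit)

lemma residues_partition:
  assumes p1: "prime p1" and p2: "prime p2" and ne: "p1 \<noteq> p2"
  shows "{1..p1*p2-1} = setA (p1*p2) \<union> (setB p1 p2 \<union> setC p1 p2)"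
    and "setA (p1*p2) \<inter> (setB p1 p2 \<union> setC p1 p2) = {}"
    and "setB p1 p2 \<inter> setC p1 p2 = {}"
proof -
  define U where "U = {1..p1*p2-1}"
  have "p1 > 0" "p2 > 0" using p1 p2 prime_gt_0_nat by auto
  have A: "setA (p1*p2) = {l\<in>U. \<not> p1 dvd l \<and> \<not> p2 dvd l}"
    unfolding setA_def U_def using p1 p2 by (auto simp: coprime_prime_iff)
  have B: "setB p1 p2 = {l\<in>U. p1 dvd l}"
    unfolding setB_def U_def using \<open>p1 > 0\<close> \<open>p2 > 0\<close> by (rule nonzero_multiples_eq)
  have C: "setC p1 p2 = {l\<in>U. p2 dvd l}"
    unfolding setC_def U_def using nonzero_multiples_eq[OF \<open>p2 > 0\<close> \<open>p1 > 0\<close>]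
    by (simp add: mult.commute)
  have "\<not> (p1 dvd l \<and> p2 dvd l)" if "l \<in> U" for l
  proof
    assume "p1 dvd l \<and> p2 dvd l"
    then have "p1 * p2 dvd l" using primes_coprime[OF p1 p2 ne] by (simp add: divides_mult)
    moreover have "0 < l" "l < p1 * p2" using that \<open>p1 > 0\<close> \<open>p2 > 0\<close> unfolding U_def by auto
    ultimately show False using dvd_imp_le by fastforce
  qed
  then show "U = setA (p1*p2) \<union> (setB p1 p2 \<union> setC p1 p2)"
    and "setA (p1*p2) \<inter> (setB p1 p2 \<union> setC p1 p2) = {}"
    and "setB p1 p2 \<inter> setC p1 p2 = {}"
    unfolding A B C by auto
qed

definition dtype :: "nat \<Rightarrow> nat \<Rightarrow> int \<Rightarrow> bool \<times> bool" where
  "dtype p1 p2 k = (int p1 dvd k, int p2 dvd k)"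

lemma dtype_uminus [simp]: "dtype p1 p2 (- k) = dtype p1 p2 k"
  by (simp add: dtype_def)

definition valB :: "nat \<Rightarrow> bool \<times> bool \<Rightarrow> complex" where
  "valB p2 t = (if snd t then of_nat p2 else 0) - 1"

definition valC :: "nat \<Rightarrow> bool \<times> bool \<Rightarrow> complex" where
  "valC p1 t = (if fst t then of_nat p1 else 0) - 1"

definition valA :: "nat \<Rightarrow> nat \<Rightarrow> bool \<times> bool \<Rightarrow> complex" where
  "valA p1 p2 t = (if fst t \<and> snd t then of_nat (p1*p2) else 0) - 1 - valB p2 t - valC p1 t"

lemma exp_sum_setB: "prime p1 \<Longrightarrow> prime p2 \<Longrightarrow>
    exp_sum (p1*p2) (setB p1 p2) k = valB p2 (dtype p1 p2 k)"
  unfolding setB_def valB_def dtype_def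
  by (subst exp_sum_nonzero_multiples) (auto simp: prime_gt_0_nat mult.commute)

lemma exp_sum_setC: "prime p1 \<Longrightarrow> prime p2 \<Longrightarrow>
    exp_sum (p1*p2) (setC p1 p2) k = valC p1 (dtype p1 p2 k)"
  unfolding setC_def valC_def dtype_def
  by (subst exp_sum_nonzero_multiples) (auto simp: prime_gt_0_nat)

lemma dvd_prime_product_iff:
  "prime p1 \<Longrightarrow> prime p2 \<Longrightarrow> p1 \<noteq> p2 \<Longrightarrow> int (p1*p2) dvd k \<longleftrightarrow> int p1 dvd k \<and> int p2 dvd k"
  using primes_coprime[of p1 p2] divides_mult[of "int p1" k "int p2"]
  by (auto intro: dvd_mult_left dvd_mult_right)

text \<open>The sum over A is the full orthogonality sum minus the contributions of 0, B and C.\<close>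
lemma exp_sum_setA:
  assumes p1: "prime p1" and p2: "prime p2" and ne: "p1 \<noteq> p2"
  shows "exp_sum (p1*p2) (setA (p1*p2)) k = valA p1 p2 (dtype p1 p2 k)"
proof -
  define q where "q = p1 * p2"
  have "q > 0" using p1 p2 prime_gt_0_nat unfolding q_def by simp
  then have "{..<q} = insert 0 {1..q-1}" by auto
  then have "exp_sum q {..<q} k = 1 + exp_sum q {1..q-1} k"
    unfolding exp_sum_def by simp
  also have "exp_sum q {1..q-1} k =
      exp_sum q (setA q) k + exp_sum q (setB p1 p2) k + exp_sum q (setC p1 p2) k"
  proof -
    have fin: "finite (setA q)" "finite (setB p1 p2)" "finite (setC p1 p2)"
      unfolding setA_def setB_def setC_def by simp_all
    have "exp_sum q {1..q-1} k = exp_sum q (setA q) k + exp_sum q (setB p1 p2 \<union> setC p1 p2) k"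
      unfolding exp_sum_def residues_partition(1)[OF assms, folded q_def]
      by (rule sum.union_disjoint[OF fin(1) finite_UnI[OF fin(2,3)]
            residues_partition(2)[OF assms, folded q_def]])
    also have "exp_sum q (setB p1 p2 \<union> setC p1 p2) k = exp_sum q (setB p1 p2) k + exp_sum q (setC p1 p2) k"
      unfolding exp_sum_def by (rule sum.union_disjoint[OF fin(2,3) residues_partition(3)[OF assms]])
    finally show ?thesis by simp
  qed
  finally have "exp_sum q {..<q} k =
      1 + exp_sum q (setA q) k + exp_sum q (setB p1 p2) k + exp_sum q (setC p1 p2) k" by simp
  moreover have "exp_sum q {..<q} k = (if int q dvd k then of_nat q else 0)"
    using gam_sum_multiples[of q 1 q k] \<open>q > 0\<close> unfolding exp_sum_def by simp
  ultimately show ?thesis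
    using exp_sum_setB[OF p1 p2] exp_sum_setC[OF p1 p2] dvd_prime_product_iff[OF assms]
    unfolding q_def valA_def dtype_def by (simp add: algebra_simps)
qed

section \<open>The map factors through divisibility types\<close>

type_synonym signature = "(bool \<times> bool) \<times> (bool \<times> bool) \<times> (bool \<times> bool) \<times> (bool \<times> bool)"

text \<open>The triple of quartics determined by the types (t1, t2, t3, t4) of q1, q2, q1+q2, q1-q2.\<close>
definition Sform :: "nat \<Rightarrow> nat \<Rightarrow> signature \<Rightarrow> complex poly \<times> complex poly \<times> complex poly" where
  "Sform p1 p2 tt = (case tt of (t1, t2, t3, t4) \<Rightarrow>
     (quartic (card (setA (p1*p2))) (2 * valA p1 p2 t1 + 2 * valA p1 p2 t2)
        (2 * valA p1 p2 t3 + 2 * valA p1 p2 t4),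
      quartic (card (setB p1 p2)) (2 * valB p2 t1 + 2 * valB p2 t2) (2 * valB p2 t3 + 2 * valB p2 t4),
      quartic (card (setC p1 p2)) (2 * valC p1 t1 + 2 * valC p1 t2) (2 * valC p1 t3 + 2 * valC p1 t4)))"

lemma Sform_swap:
  "Sform p1 p2 (t2, t1, t3, t4) = Sform p1 p2 (t1, t2, t3, t4)"
  "Sform p1 p2 (t1, t2, t4, t3) = Sform p1 p2 (t1, t2, t3, t4)"
  by (simp_all add: Sform_def add.commute)

text \<open>The map S factors through the divisibility types of q1, q2, q1+q2, q1-q2
  (the types of -k and k agree, which absorbs the signs arising from E_S(-a)).\<close>
lemma Smap_Sform:
  assumes "prime p1" and "prime p2" and "p1 \<noteq> p2"
  shows "Smap p1 p2 (a, b) =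
    Sform p1 p2 (dtype p1 p2 a, dtype p1 p2 b, dtype p1 p2 (a + b), dtype p1 p2 (a - b))"
proof -
  have "dtype p1 p2 (b - a) = dtype p1 p2 (a - b)"
    using dtype_uminus[of p1 p2 "a - b"] by simp
  moreover have "dtype p1 p2 (- a - b) = dtype p1 p2 (a + b)"
    using dtype_uminus[of p1 p2 "a + b"] by simp
  ultimately show ?thesis
    unfolding Smap_def Sform_def PiS_quartic cos_sum_exp_sum quartic_def
      exp_sum_setA[OF assms] exp_sum_setB[OF assms(1,2)] exp_sum_setC[OF assms(1,2)]
    by (simp add: algebra_simps)
qed

section \<open>Counting the admissible type patterns\<close>

definition all_or_sparse :: "bool \<Rightarrow> bool \<Rightarrow> bool \<Rightarrow> bool \<Rightarrow> bool" where
  "all_or_sparse a1 a2 a3 a4 \<longleftrightarrow> (a1 \<and> a2 \<and> a3 \<and> a4)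
     \<or> (\<not> a1 \<and> \<not> a2 \<and> \<not> a3 \<and> \<not> a4) \<or> (a1 \<and> \<not> a2 \<and> \<not> a3 \<and> \<not> a4)
     \<or> (\<not> a1 \<and> a2 \<and> \<not> a3 \<and> \<not> a4) \<or> (\<not> a1 \<and> \<not> a2 \<and> a3 \<and> \<not> a4) \<or> (\<not> a1 \<and> \<not> a2 \<and> \<not> a3 \<and> a4)"

text \<open>An odd prime dividing two of x, y, x+y, x-y divides all four: each of the four is
  a combination of any two others, up to a factor 2.\<close>
lemma odd_prime_dvd_all_or_sparse:
  fixes p :: nat and x y :: int
  assumes "prime p" and "odd p"
  shows "all_or_sparse (int p dvd x) (int p dvd y) (int p dvd (x + y)) (int p dvd (x - y))"
proof -
  have "\<not> int p dvd 2"
  proof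
    assume "int p dvd 2"
    then have "p dvd 2" by (metis int_dvd_int_iff of_nat_numeral)
    then have "p \<le> 2" by (simp add: dvd_imp_le)
    then show False using assms prime_gt_1_nat[of p] by (cases "p = 2") auto
  qed
  then have halve: "int p dvd 2 * z \<Longrightarrow> int p dvd z" for z
    using \<open>prime p\<close> prime_dvd_mult_iff[of "int p" 2 z] by auto
  have "int p dvd x \<and> int p dvd y" if "int p dvd (x + y)" "int p dvd (x - y)"
  proof -
    have "(x + y) + (x - y) = 2 * x" "(x + y) - (x - y) = 2 * y" by simp_all
    then show ?thesis using halve dvd_add[OF that] dvd_diff[OF that] by metis
  qed
  moreover have "int p dvd x \<longleftrightarrow> int p dvd y" if "int p dvd (x + y)"
    using that dvd_add_right_iff[of "int p" x y] dvd_add_left_iff[of "int p" y x] by auto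
  moreover have "int p dvd x \<longleftrightarrow> int p dvd y" if "int p dvd (x - y)"
    using that dvd_diff[of "int p" x "x - y"] dvd_add[of "int p" "x - y" y] by auto
  moreover have "int p dvd (x + y) \<and> int p dvd (x - y)" if "int p dvd x" "int p dvd y"
    using that by simp
  ultimately show ?thesis unfolding all_or_sparse_def by blast
qed

definition reps :: "signature list" where
  "reps = (let N = (False, False); P = (True, False); Q = (False, True) in
     [(P,P,P,P), (Q,Q,Q,Q), (N,N,N,N), (P,N,N,N), (Q,N,N,N), (N,N,P,N), (N,N,Q,N),
      (P,Q,N,N), (N,N,P,Q), (P,N,Q,N), (Q,N,P,N)])"

lemma reps_cover:
  assumes "all_or_sparse a1 a2 a3 a4" and "all_or_sparse b1 b2 b3 b4"
    and "\<not> (a1 \<and> b1)" "\<not> (a2 \<and> b2)" "\<not> (a3 \<and> b3)" "\<not> (a4 \<and> b4)"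
  shows "((a1,b1),(a2,b2),(a3,b3),(a4,b4)) \<in> set reps \<or> ((a2,b2),(a1,b1),(a3,b3),(a4,b4)) \<in> set reps
     \<or> ((a1,b1),(a2,b2),(a4,b4),(a3,b3)) \<in> set reps \<or> ((a2,b2),(a1,b1),(a4,b4),(a3,b3)) \<in> set reps"
  using assms unfolding all_or_sparse_def reps_def Let_def
  by (elim disjE; simp)

lemma Smap_in_reps:
  assumes "prime p1" and "prime p2" and "odd p1" and "odd p2" and "p1 \<noteq> p2"
    and "admissible (p1*p2) (x, y)"
  shows "Smap p1 p2 (x, y) \<in> Sform p1 p2 ` set reps"
proof -
  define t1 t2 t3 t4 where "t1 = dtype p1 p2 x" and "t2 = dtype p1 p2 y"
    and "t3 = dtype p1 p2 (x + y)" and "t4 = dtype p1 p2 (x - y)"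
  have "(t1, t2, t3, t4) \<in> set reps \<or> (t2, t1, t3, t4) \<in> set reps
      \<or> (t1, t2, t4, t3) \<in> set reps \<or> (t2, t1, t4, t3) \<in> set reps"
    unfolding t1_def t2_def t3_def t4_def dtype_def
    using reps_cover odd_prime_dvd_all_or_sparse[OF assms(1,3)] odd_prime_dvd_all_or_sparse[OF assms(2,4)]
      assms(6) unfolding admissible_def dvd_prime_product_iff[OF assms(1,2,5)] by simp
  moreover have "Smap p1 p2 (x, y) = Sform p1 p2 (t1, t2, t3, t4)"
    unfolding t1_def t2_def t3_def t4_def by (rule Smap_Sform[OF assms(1,2,5)])
  ultimately show ?thesis by (metis Sform_swap image_eqI)
qed

theorem proposition3p1p3:
  fixes p1 p2 :: nat
  assumes "prime p1" and "prime p2" and "odd p1" and "odd p2" and "p1 \<noteq> p2"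
  shows "finite (Smap p1 p2 ` {qq. admissible (p1*p2) qq})
         \<and> card (Smap p1 p2 ` {qq. admissible (p1*p2) qq}) \<le> 11"
proof -
  have sub: "Smap p1 p2 ` {qq. admissible (p1*p2) qq} \<subseteq> Sform p1 p2 ` set reps"
    using Smap_in_reps[OF assms] by auto
  have "card (Sform p1 p2 ` set reps) \<le> length reps"
    using card_image_le[of "set reps" "Sform p1 p2"] card_length[of reps] by simp
  also have "length reps = 11" by (simp add: reps_def Let_def)
  finally show ?thesis
    using sub card_mono[OF _ sub] finite_subset[OF sub] by simp
qed

end
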